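(* Let $n\ge3$ and define $c\in\mathbb{Z}_{\ge0}^n$ by $c_k=n-1$ for $k\le n-3$ and $c_k=1$ for $k\in\{n-2,n-1,n\}$. Then $c\in\mathrm{StoRec}_n\setminus\mathrm{PSR}_n(n-3)$.
   Context: $K_n^0$ is the complete graph on vertex set $\{0,1,\dots,n\}$ with sink $0$; every vertex has degree $n$. A configuration is $c\in\mathbb{Z}_{\ge0}^n$, stable if $c_i\le n-1$ for all $i$; $c^{\max}=(n-1,\dots,n-1)$. A deterministic toppling of an unstable vertex $i$ sends one grain to each neighbour (grains sent to the sink disappear). A stochastic toppling (parameter $p\in(0,1)$) of an unstable vertex $i$ sends, independently for each incident edge, one grain along it with probability $p$, else keeps it. For $k\in\{0,\dots,n\}$, the $k$-partial SSM on $K_n^0$ is the model in which vertices $1,\dots,k$ topple stochastically and vertices $k+1,\dots,n$ topple deterministically; its Markov chain on stable configurations adds a grain at vertex $i$ with probability $\mu_i>0$ and then stabilises. $\mathrm{PSR}_n(k)$ is its set of recurrent states; equivalently, the stable configurations reachable from $c^{\max}$ by a finite sequence of grain additions and topplings of unstable vertices in which vertices $k+1,\dots,n$ topple deterministically and vertices $1,\dots,k$ send one grain along each edge of an arbitrary subset of their incident edges. $\mathrm{StoRec}_n=\mathrm{PSR}_n(n)$ is the set of recurrent states of the SSM (all vertices topple stochastically). *)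

theory Defs
  imports Main
begin

text \<open>Configurations on K_n^0: functions nat => nat; vertices 1..n are the
non-sink vertices, 0 is the sink; values outside 1..n are kept at 0.\<close>

definition cmax :: "nat \<Rightarrow> (nat \<Rightarrow> nat)" where
  "cmax n = (\<lambda>j. if j \<in> {1..n} then n - 1 else 0)"

definition stable :: "nat \<Rightarrow> (nat \<Rightarrow> nat) \<Rightarrow> bool" where
  "stable n c \<longleftrightarrow> (\<forall>j\<in>{1..n}. c j \<le> n - 1)"

definition nbrs :: "nat \<Rightarrow> nat \<Rightarrow> nat set" where
  "nbrs n i = {0..n} - {i}"

definition topple :: "(nat \<Rightarrow> nat) \<Rightarrow> nat \<Rightarrow> nat set \<Rightarrow> (nat \<Rightarrow> nat)" where
  "topple c i S = (\<lambda>j. if j = i then c i - card S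
                        else if j \<in> S \<and> j \<noteq> 0 then c j + 1 else c j)"

text \<open>Reachability from c^max in the k-partial model: vertices 1..k topple
along an arbitrary subset of incident edges, vertices k+1..n deterministically.\<close>
inductive reach :: "nat \<Rightarrow> nat \<Rightarrow> (nat \<Rightarrow> nat) \<Rightarrow> bool" for n k where
  start: "reach n k (cmax n)"
| add: "reach n k c \<Longrightarrow> i \<in> {1..n} \<Longrightarrow> reach n k (c(i := c i + 1))"
| top: "reach n k c \<Longrightarrow> i \<in> {1..n} \<Longrightarrow> n \<le> c i \<Longrightarrow> S \<subseteq> nbrs n i
        \<Longrightarrow> (k < i \<Longrightarrow> S = nbrs n i) \<Longrightarrow> reach n k (topple c i S)"

definition PSR :: "nat \<Rightarrow> nat \<Rightarrow> (nat \<Rightarrow> nat) set" where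
  "PSR n k = {c. reach n k c \<and> stable n c}"

definition StoRec :: "nat \<Rightarrow> (nat \<Rightarrow> nat) set" where
  "StoRec n = PSR n n"

end

theory Submission
  imports Defs
begin

text \<open>If every vertex of a nonempty set A topples deterministically, then the reachable
configurations always have a vertex of A carrying at least card A - 1 grains: this holds for
c^max, and a toppling vertex i of A gives one grain to each other vertex of A, so the witness
for A - {i} gains the missing grain. The three vertices n-2, n-1, n carrying one grain each
violate this for k = n - 3. In the fully stochastic model the configuration is reached from
c^max by toppling n-2, n-1 and n in turn, each time pushing the surplus of the vertices
1..n-3 into the sink.\<close>

lemma reach_deterministic_set_has_rich_vertex:
  assumes "reach n k c" "A \<subseteq> {k<..n}" "A \<noteq> {}"
  shows "\<exists>v\<in>A. card A - 1 \<le> c v"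
  using assms
proof (induction arbitrary: A rule: reach.induct)
  case start
  then obtain v where v: "v \<in> A" by blast
  have "card A \<le> n"
    using card_mono[OF _ start.prems(1)] by simp
  with v start.prems(1) show ?case
    by (intro bexI[of _ v]) (auto simp: cmax_def)
next
  case (add c i)
  then obtain v where "v \<in> A" "card A - 1 \<le> c v" by blast
  then show ?case by (intro bexI[of _ v]) auto
next
  case (top c i S)
  have finA: "finite A"
    using top.prems(1) finite_subset by blast
  show ?case
  proof (cases "i \<in> A")
    case False
    then obtain v where v: "v \<in> A" "card A - 1 \<le> c v"
      using top.IH top.prems by blast
    with False have "c v \<le> topple c i S v"
      unfolding topple_def by auto
    with v show ?thesis by force
  next
    case True
    then have S: "S = nbrs n i"
      using top.hyps(5) top.prems(1) by auto
    show ?thesis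
    proof (cases "A = {i}")
      case True
      then show ?thesis by simp
    next
      case False
      with True top.prems have "A - {i} \<subseteq> {k<..n}" "A - {i} \<noteq> {}" by auto
      then obtain w where w: "w \<in> A - {i}" "card (A - {i}) - 1 \<le> c w"
        using top.IH by blast
      have "topple c i S w = c w + 1"
        using w top.prems(1) unfolding topple_def S nbrs_def by auto
      moreover have "card (A - {i}) = card A - 1"
        using finA True by simp
      ultimately show ?thesis
        using w finA True by (intro bexI[of _ w]) auto
    qed
  qed
qed

lemma reach_topple_into_sink:
  assumes "reach n k c" "T \<subseteq> {1..k}" "k \<le> n" "\<forall>j\<in>T. c j = n"
  shows "reach n k (\<lambda>j. if j \<in> T then n - 1 else c j)"
proof -
  have "finite T"
    using assms(2) finite_subset by blast
  then show ?thesis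
    using assms(2,4)
  proof (induction T rule: finite_induct)
    case empty
    then show ?case using assms(1) by simp
  next
    case (insert t T)
    let ?c = "\<lambda>j. if j \<in> T then n - 1 else c j"
    have "reach n k (topple ?c t {0})"
      using insert assms(3) by (intro reach.top) (auto simp: nbrs_def)
    also have "topple ?c t {0} = (\<lambda>j. if j \<in> insert t T then n - 1 else c j)"
      using insert by (auto simp: topple_def fun_eq_iff)
    finally show ?case .
  qed
qed

definition cfg :: "nat \<Rightarrow> nat \<Rightarrow> nat \<Rightarrow> nat \<Rightarrow> nat \<Rightarrow> nat \<Rightarrow> nat" where
  "cfg n b x y z = (\<lambda>j. if j \<in> {1..n-3} then b else if j = n-2 then x
      else if j = n-1 then y else if j = n then z else 0)"

lemma reach_cfg_dump:
  assumes "n \<ge> 3" "reach n n (cfg n n x y z)"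
  shows "reach n n (cfg n (n-1) x y z)"
proof -
  have "reach n n (\<lambda>j. if j \<in> {1..n-3} then n - 1 else cfg n n x y z j)"
    using assms by (intro reach_topple_into_sink) (auto simp: cfg_def)
  also have "(\<lambda>j. if j \<in> {1..n-3} then n - 1 else cfg n n x y z j) = cfg n (n-1) x y z"
    by (auto simp: cfg_def fun_eq_iff)
  finally show ?thesis .
qed

lemma card_nbrs: "i \<le> n \<Longrightarrow> card (nbrs n i) = n"
  unfolding nbrs_def by simp

lemma reach_stochastic_cfg_111:
  assumes n: "n \<ge> 3"
  shows "reach n n (cfg n (n-1) 1 1 1)"
proof -
  have "cmax n = cfg n (n-1) (n-1) (n-1) (n-1)"
    using n by (auto simp: cmax_def cfg_def fun_eq_iff)
  then have "reach n n (cfg n (n-1) (n-1) (n-1) (n-1))"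
    using reach.start by metis
  then have "reach n n ((cfg n (n-1) (n-1) (n-1) (n-1))(n-2 := cfg n (n-1) (n-1) (n-1) (n-1) (n-2) + 1))"
    using n by (intro reach.add) auto
  also have "(cfg n (n-1) (n-1) (n-1) (n-1))(n-2 := cfg n (n-1) (n-1) (n-1) (n-1) (n-2) + 1)
      = cfg n (n-1) n (n-1) (n-1)"
    using n by (auto simp: cfg_def fun_eq_iff)
  finally have "reach n n (topple (cfg n (n-1) n (n-1) (n-1)) (n-2) (nbrs n (n-2)))"
    using n by (intro reach.top) (auto simp: cfg_def)
  also have "topple (cfg n (n-1) n (n-1) (n-1)) (n-2) (nbrs n (n-2)) = cfg n n 0 n n"
    using n card_nbrs[of "n-2" n] by (auto simp: topple_def cfg_def nbrs_def fun_eq_iff)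
  finally have "reach n n (topple (cfg n (n-1) 0 n n) (n-1) (nbrs n (n-1)))"
    using n by (intro reach.top reach_cfg_dump) (auto simp: cfg_def)
  also have "topple (cfg n (n-1) 0 n n) (n-1) (nbrs n (n-1)) = cfg n n 1 0 (n+1)"
    using n card_nbrs[of "n-1" n] by (auto simp: topple_def cfg_def nbrs_def fun_eq_iff)
  finally have "reach n n (topple (cfg n (n-1) 1 0 (n+1)) n {0})"
    using n by (intro reach.top reach_cfg_dump) (auto simp: cfg_def nbrs_def)
  also have "topple (cfg n (n-1) 1 0 (n+1)) n {0} = cfg n (n-1) 1 0 n"
    using n by (auto simp: topple_def cfg_def fun_eq_iff)
  finally have "reach n n (topple (cfg n (n-1) 1 0 n) n (nbrs n n - {n-2}))"
    using n by (intro reach.top) (auto simp: cfg_def nbrs_def)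
  also have "topple (cfg n (n-1) 1 0 n) n (nbrs n n - {n-2}) = cfg n n 1 1 1"
    using n card_nbrs[of n n] by (auto simp: topple_def cfg_def nbrs_def fun_eq_iff)
  finally show ?thesis
    using n by (rule reach_cfg_dump[rotated])
qed

theorem proposition5p3:
  fixes n :: nat
  assumes "n \<ge> 3"
  shows "(\<lambda>k. if k \<in> {1..n-3} then n - 1 else if k \<in> {n-2..n} then 1 else 0)
           \<in> StoRec n - PSR n (n - 3)"
proof -
  let ?c = "\<lambda>k. if k \<in> {1..n-3} then n - 1 else if k \<in> {n-2..n} then 1 else (0::nat)"
  have "?c = cfg n (n-1) 1 1 1"
    using assms by (auto simp: cfg_def fun_eq_iff)
  then have "reach n n ?c"
    using reach_stochastic_cfg_111[OF assms] by simp
  moreover have "stable n ?c"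
    using assms by (auto simp: stable_def)
  moreover have "\<not> reach n (n-3) ?c"
  proof
    assume "reach n (n-3) ?c"
    moreover have "{n-2, n-1, n} \<subseteq> {n-3<..n}"
      using assms by auto
    ultimately have "\<exists>v\<in>{n-2, n-1, n}. card {n-2, n-1, n} - 1 \<le> ?c v"
      by (rule reach_deterministic_set_has_rich_vertex) simp
    then obtain v where v: "v \<in> {n-2, n-1, n}" "card {n-2, n-1, n} - 1 \<le> ?c v" ..
    have "card {n-2, n-1, n} = 3"
      using assms by (simp add: card_insert_if; linarith)
    moreover have "?c v = 1"
      using v(1) assms by auto
    ultimately show False
      using v(2) by simp
  qed
  ultimately show ?thesis
    by (simp add: StoRec_def PSR_def)
qed

end
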